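(* Let $(b_k)_{k\in\mathbb{N}_0}$ be a sequence of strictly positive real numbers. The following are equivalent: (i) $(b_k)_{k\in\mathbb{N}_0}\in\mathcal{LM}_\infty$. (ii) There is an infinitely divisible probability measure $\kappa$ on $[0,\infty]$ with $\kappa(\{0\})<1$ and $\kappa(\{\infty\})<1$ such that $b_k=\int_{[0,\infty]}e^{-kx}\,\kappa(dx)$ for all $k\in\mathbb{N}_0$ (with the convention $\infty\cdot 0=0$). (iii) For each fixed $r>0$, $(b_k^r)_{k\in\mathbb{N}_0}\in\mathcal{M}_\infty$. (iv) For each fixed $n\in\mathbb{N}$, $(b_k^{1/n})_{k\in\mathbb{N}_0}\in\mathcal{M}_\infty$.
   Context: $\nabla^jx_k:=\sum_{i=0}^j(-1)^i\binom{j}{i}x_{k+i}$. $\mathcal{M}_\infty:=\{(x_k)_{k\in\mathbb{N}_0}\in\mathbb{R}^{\mathbb{N}_0}: x_0=1,\ x_1<1,\ \nabla^jx_k\ge0\ \forall j,k\in\mathbb{N}_0\}$. $\mathcal{LM}_\infty:=\{(x_k)_{k\in\mathbb{N}_0}\in(0,\infty)^{\mathbb{N}_0}: x_0=1,\ x_1<1,\ \nabla^j\ln x_k\ge0\ \forall k\in\mathbb{N}_0,\ j\in\mathbb{N}\}$. A probability measure $\kappa$ on $[0,\infty]$ (equivalently a $[0,\infty]$-valued random variable $X$) is infinitely divisible if for every $n\ge2$ there are $n$ i.i.d. $[0,\infty]$-valued random variables whose sum (with $x+\infty=\infty$) has law $\kappa$. *)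

theory Defs
  imports "HOL-Probability.Probability"
begin

definition nabla :: "nat \<Rightarrow> (nat \<Rightarrow> real) \<Rightarrow> nat \<Rightarrow> real" where
  "nabla j x k = (\<Sum>i=0..j. (-1)^i * real (j choose i) * x (k + i))"

definition M_inf :: "(nat \<Rightarrow> real) set" where
  "M_inf = {x. x 0 = 1 \<and> x 1 < 1 \<and> (\<forall>j k. nabla j x k \<ge> 0)}"

definition LM_inf :: "(nat \<Rightarrow> real) set" where
  "LM_inf = {x. (\<forall>k. x k > 0) \<and> x 0 = 1 \<and> x 1 < 1 \<and>
                 (\<forall>k j. j \<ge> 1 \<longrightarrow> nabla j (\<lambda>i. ln (x i)) k \<ge> 0)}"

text \<open>Probability measures on [0,\<infinity>], modelled as Borel probability measures on ennreal.\<close>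
definition prob_on_ext :: "ennreal measure \<Rightarrow> bool" where
  "prob_on_ext \<kappa> \<longleftrightarrow> prob_space \<kappa> \<and> sets \<kappa> = sets borel"

text \<open>Infinite divisibility: for every n \<ge> 2 there are n i.i.d. [0,\<infinity>]-valued random
  variables (realised canonically as the coordinate projections of the n-fold product
  of a law \<mu>) whose sum (with x + \<infinity> = \<infinity>) has law \<kappa>.\<close>
definition inf_divisible :: "ennreal measure \<Rightarrow> bool" where
  "inf_divisible \<kappa> \<longleftrightarrow> prob_on_ext \<kappa> \<and>
     (\<forall>n::nat. n \<ge> 2 \<longrightarrow> (\<exists>\<mu>. prob_on_ext \<mu> \<and>
        distr (PiM {..<n} (\<lambda>_. \<mu>)) borel (\<lambda>\<omega>. \<Sum>i<n. \<omega> i) = \<kappa>))"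

text \<open>The function x \<mapsto> e^{-kx} on [0,\<infinity>] with the convention \<infinity>\<cdot>0 = 0.\<close>
definition exp_neg :: "nat \<Rightarrow> ennreal \<Rightarrow> real" where
  "exp_neg k x = (if x = \<infinity> then (if k = 0 then 1 else 0) else exp (- real k * enn2real x))"

end

theory Submission
  imports Defs "HOL-Real_Asymp.Real_Asymp"
begin

text \<open>
  The product rule for backward differences shows that if all higher differences of \<open>g\<close> are
  nonnegative, then so are all differences of \<open>exp (r * g)\<close> for every \<open>r > 0\<close>; with
  \<open>g = ln b\<close> this is (i) \<open>\<Longrightarrow>\<close> (iii). Conversely \<open>n (b\<^sub>k\<^bsup>1/n\<^esup> - 1) \<rightarrow> ln b\<^sub>k\<close>, so the
  differences of \<open>ln b\<close> are limits of nonnegative ones, giving (iv) \<open>\<Longrightarrow>\<close> (i).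

  The link with (ii) is Hausdorff's moment theorem: a sequence \<open>c\<close> with \<open>c\<^sub>0 = 1\<close> and all
  \<open>\<nabla>\<^sup>jc\<^sub>k \<ge> 0\<close> is the moment sequence of a unique probability measure on \<open>[0,1]\<close>, namely a
  weak limit of the discrete measures with weight \<open>(n choose k) \<nabla>\<^sup>n\<^sup>-\<^sup>kc\<^sub>k\<close> at \<open>k/n\<close>
  (uniqueness comes from Bernstein approximation). The substitution \<open>y = e\<^sup>-\<^sup>x\<close> turns this
  into a unique measure \<open>\<kappa>\<close> on \<open>[0,\<infinity>]\<close> with \<open>c\<^sub>k = \<integral> e\<^sup>-\<^sup>k\<^sup>x d\<kappa>\<close>. As this transform
  maps the law of a sum of independent variables to the product of the transforms, the
  measure representing \<open>b\<^bsup>1/n\<^esup>\<close> is an \<open>n\<close>-th convolution root of the one representing \<open>b\<close>.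
\<close>

section \<open>Backward differences\<close>

lemma nabla_0 [simp]: "nabla 0 x k = x k"
  by (simp add: nabla_def)

lemma nabla_Suc: "nabla (Suc j) x k = nabla j x k - nabla j x (Suc k)"
proof -
  have "nabla (Suc j) x k = (\<Sum>i\<le>Suc j. (-1)^i * real (Suc j choose i) * x (k + i))"
    by (simp add: nabla_def atLeast0AtMost)
  also have "\<dots> = x k + (\<Sum>i\<le>j. (-1)^(Suc i) * real (Suc j choose Suc i) * x (k + Suc i))"
    by (subst sum.atMost_Suc_shift) simp
  also have "\<dots> = x k + (\<Sum>i\<le>j. (-1)^(Suc i) * real (j choose i) * x (k + Suc i))
         + (\<Sum>i\<le>j. (-1)^(Suc i) * real (j choose Suc i) * x (k + Suc i))"
    unfolding add.assoc sum.distrib[symmetric]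
    by (rule arg_cong[where f="\<lambda>t. x k + t"], rule sum.cong) (simp_all add: algebra_simps)
  also have "(\<Sum>i\<le>j. (-1)^(Suc i) * real (j choose Suc i) * x (k + Suc i))
      = (\<Sum>i\<le>Suc j. (-1)^i * real (j choose i) * x (k + i)) - x k"
    by (simp only: sum.atMost_Suc_shift) simp
  also have "(\<Sum>i\<le>Suc j. (-1)^i * real (j choose i) * x (k + i)) = nabla j x k"
    by (simp add: nabla_def atLeast0AtMost)
  also have "(\<Sum>i\<le>j. (-1)^(Suc i) * real (j choose i) * x (k + Suc i)) = - nabla j x (Suc k)"
    by (simp add: nabla_def atLeast0AtMost sum_negf[symmetric])
  finally show ?thesis by simp
qed

lemma nabla_cong: "(\<And>k. x k = y k) \<Longrightarrow> nabla j x k = nabla j y k"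
  by (simp add: nabla_def)

lemma nabla_shift: "nabla j (\<lambda>k. x (Suc k)) k = nabla j x (Suc k)"
  by (simp add: nabla_def)

lemma nabla_add: "nabla j (\<lambda>k. x k + y k) k = nabla j x k + nabla j y k"
  by (simp add: nabla_def sum.distrib algebra_simps)

lemma nabla_diff: "nabla j (\<lambda>k. x k - y k) k = nabla j x k - nabla j y k"
  by (simp add: nabla_def sum_subtractf algebra_simps)

lemma nabla_cmult: "nabla j (\<lambda>k. c * x k) k = c * nabla j x k"
  by (simp add: nabla_def sum_distrib_left algebra_simps)

lemma nabla_const: "1 \<le> j \<Longrightarrow> nabla j (\<lambda>k. c) k = 0"
proof (induction j)
  case (Suc j)
  have "nabla j (\<lambda>k. c) k = nabla j (\<lambda>k. c) (Suc k)"
    by (simp add: nabla_def)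
  then show ?case by (simp add: nabla_Suc)
qed simp

lemma nabla_Suc_eq_nabla_diff: "nabla (Suc j) x k = nabla j (\<lambda>k. x k - x (Suc k)) k"
  by (simp add: nabla_Suc nabla_diff nabla_shift)

text \<open>Leibniz rule: \<open>\<nabla>(u v)\<^sub>k = (\<nabla>u)\<^sub>k v\<^sub>k + u\<^sub>k\<^sub>+\<^sub>1 (\<nabla>v)\<^sub>k\<close>.\<close>

lemma nabla_mult_nonneg:
  assumes "\<And>i k. i \<le> j \<Longrightarrow> 0 \<le> nabla i u k" and "\<And>i k. i \<le> j \<Longrightarrow> 0 \<le> nabla i v k"
  shows "0 \<le> nabla j (\<lambda>k. u k * v k) k"
  using assms
proof (induction j arbitrary: u v k)
  case 0
  then show ?case by simp
next
  case (Suc j)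
  have "nabla (Suc j) (\<lambda>k. u k * v k) k =
      nabla j (\<lambda>k. (u k - u (Suc k)) * v k) k + nabla j (\<lambda>k. u (Suc k) * (v k - v (Suc k))) k"
    unfolding nabla_Suc_eq_nabla_diff nabla_add[symmetric]
    by (rule nabla_cong) (simp add: algebra_simps)
  moreover have "0 \<le> nabla j (\<lambda>k. (u k - u (Suc k)) * v k) k"
    by (rule Suc.IH) (use Suc.prems in \<open>auto simp: nabla_Suc_eq_nabla_diff[symmetric]\<close>)
  moreover have "0 \<le> nabla j (\<lambda>k. u (Suc k) * (v k - v (Suc k))) k"
    by (rule Suc.IH) (use Suc.prems in \<open>auto simp: nabla_Suc_eq_nabla_diff[symmetric] nabla_shift\<close>)
  ultimately show ?case by simp
qed

lemma nabla_exp_nonneg: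
  assumes "\<And>i k. 1 \<le> i \<Longrightarrow> 0 \<le> nabla i g k"
  shows "0 \<le> nabla j (\<lambda>k. exp (g k)) k"
  using assms
proof (induction j arbitrary: g k rule: less_induct)
  case (less j)
  show ?case
  proof (cases j)
    case 0
    then show ?thesis by simp
  next
    case (Suc j')
    define d where "d k = g k - g (Suc k)" for k
    have d: "\<And>i k. 1 \<le> i \<Longrightarrow> 0 \<le> nabla i d k"
      using less.prems unfolding d_def by (simp add: nabla_Suc_eq_nabla_diff[symmetric])
    have "nabla j (\<lambda>k. exp (g k)) k = nabla j' (\<lambda>k. exp (g (Suc k)) * (exp (d k) - 1)) k"
      unfolding Suc nabla_Suc_eq_nabla_diff d_def
      by (rule nabla_cong) (simp add: exp_diff algebra_simps)
    moreover have "0 \<le> nabla j' (\<lambda>k. exp (g (Suc k)) * (exp (d k) - 1)) k"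
    proof (rule nabla_mult_nonneg)
      fix i k assume "i \<le> j'"
      then have "i < j" using Suc by simp
      show "0 \<le> nabla i (\<lambda>k. exp (g (Suc k))) k"
        using less.IH[OF \<open>i < j\<close>, of g "Suc k"] less.prems
        by (simp add: nabla_shift[of i "\<lambda>k. exp (g k)"])
      show "0 \<le> nabla i (\<lambda>k. exp (d k) - 1) k"
      proof (cases "i = 0")
        case True
        then show ?thesis using less.prems[of 1 k] by (simp add: d_def nabla_Suc)
      next
        case False
        then show ?thesis
          using less.IH[OF \<open>i < j\<close>, of d k] d by (simp add: nabla_diff nabla_const)
      qed
    qed
    ultimately show ?thesis by simp
  qed
qed

section \<open>Powers of log-completely monotone sequences\<close>

lemma LM_inf_imp_powr_M_inf:
  assumes "b \<in> LM_inf" and "r > 0"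
  shows "(\<lambda>k. b k powr r) \<in> M_inf"
proof -
  have pos: "\<And>k. b k > 0" and b0: "b 0 = 1" and b1: "b 1 < 1"
    and ln_b: "\<And>k j. 1 \<le> j \<Longrightarrow> 0 \<le> nabla j (\<lambda>i. ln (b i)) k"
    using assms(1) unfolding LM_inf_def by auto
  have "(\<lambda>k. b k powr r) = (\<lambda>k. exp (r * ln (b k)))"
    using pos by (simp add: powr_def less_imp_neq[symmetric])
  moreover have "0 \<le> nabla j (\<lambda>k. exp (r * ln (b k))) k" for j k
    by (rule nabla_exp_nonneg) (use ln_b assms(2) in \<open>simp add: nabla_cmult\<close>)
  ultimately have "0 \<le> nabla j (\<lambda>k. b k powr r) k" for j k
    by simp
  moreover have "b 1 powr r < 1"
    using b1 pos[of 1] assms(2) powr01_less_one by blast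
  ultimately show ?thesis
    using b0 unfolding M_inf_def by simp
qed

lemma tendsto_mult_powr_inverse_minus_1:
  assumes "x > (0::real)"
  shows "(\<lambda>n. real n * (x powr (1 / real n) - 1)) \<longlonglongrightarrow> ln x"
proof -
  have "(\<lambda>n. real n * (exp (ln x / real n) - 1)) \<longlonglongrightarrow> ln x"
    by real_asymp
  then show ?thesis
    using assms by (simp add: powr_def)
qed

lemma powr_inverse_M_inf_imp_LM_inf:
  assumes pos: "\<And>k. b k > 0"
    and roots: "\<And>n::nat. 1 \<le> n \<Longrightarrow> (\<lambda>k. b k powr (1 / real n)) \<in> M_inf"
  shows "b \<in> LM_inf"
proof -
  have "(\<lambda>k. b k powr (1 / real (1::nat))) = b"
    using pos by (simp add: less_imp_le)
  then have "b \<in> M_inf"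
    using roots[of 1] by simp
  then have b0: "b 0 = 1" and b1: "b 1 < 1"
    unfolding M_inf_def by auto
  have "0 \<le> nabla j (\<lambda>i. ln (b i)) k" if j: "1 \<le> j" for j k
  proof -
    define g where "g n k = real n * (b k powr (1 / real n) - 1)" for n k
    have "(\<lambda>n. nabla j (g n) k) \<longlonglongrightarrow> nabla j (\<lambda>i. ln (b i)) k"
      unfolding nabla_def g_def
      by (intro tendsto_intros tendsto_mult_powr_inverse_minus_1 pos)
    moreover have "0 \<le> nabla j (g n) k" if "1 \<le> n" for n
    proof -
      have "nabla j (g n) k = real n * (nabla j (\<lambda>k. b k powr (1 / real n)) k - nabla j (\<lambda>k. 1) k)"
        unfolding g_def nabla_cmult[symmetric] nabla_diff[symmetric] ..
      also have "\<dots> = real n * nabla j (\<lambda>k. b k powr (1 / real n)) k"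
        using j by (simp add: nabla_const)
      finally show ?thesis
        using roots[OF that] unfolding M_inf_def by simp
    qed
    ultimately show ?thesis
      by (intro LIMSEQ_le_const) (auto intro: exI[of _ 1])
  qed
  then show ?thesis
    using pos b0 b1 unfolding LM_inf_def by auto
qed

section \<open>Measures on the unit interval are determined by their moments\<close>

lemma integrable_power_mult_one_minus_power:
  fixes f :: "'a \<Rightarrow> real"
  assumes "finite_measure M" "f \<in> borel_measurable M" "AE x in M. 0 \<le> f x \<and> f x \<le> 1"
  shows "integrable M (\<lambda>x. f x ^ k * (1 - f x) ^ j)"
proof (rule finite_measure.integrable_const_bound[OF assms(1), where B=1])
  show "AE x in M. norm (f x ^ k * (1 - f x) ^ j) \<le> 1"
    using assms(3) by eventually_elim (auto simp: abs_mult power_abs intro!: mult_le_one power_le_one)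
qed (use assms(2) in simp)

lemma nabla_integral_power:
  fixes f :: "'a \<Rightarrow> real"
  assumes "finite_measure M" "f \<in> borel_measurable M" "AE x in M. 0 \<le> f x \<and> f x \<le> 1"
  shows "nabla j (\<lambda>k. \<integral>x. f x ^ k \<partial>M) k = (\<integral>x. f x ^ k * (1 - f x) ^ j \<partial>M)"
proof (induction j arbitrary: k)
  case (Suc j)
  have "nabla (Suc j) (\<lambda>k. \<integral>x. f x ^ k \<partial>M) k =
      (\<integral>x. f x ^ k * (1 - f x) ^ j \<partial>M) - (\<integral>x. f x ^ Suc k * (1 - f x) ^ j \<partial>M)"
    by (simp add: nabla_Suc Suc.IH)
  also have "\<dots> = (\<integral>x. f x ^ k * (1 - f x) ^ j - f x ^ Suc k * (1 - f x) ^ j \<partial>M)"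
    by (intro Bochner_Integration.integral_diff[symmetric] integrable_power_mult_one_minus_power assms)
  also have "\<dots> = (\<integral>x. f x ^ k * (1 - f x) ^ Suc j \<partial>M)"
    by (rule Bochner_Integration.integral_cong) (auto simp: algebra_simps)
  finally show ?case .
qed simp

lemma integrable_Bernstein:
  assumes "finite_measure L" "sets L = sets borel" "AE x in L. 0 \<le> x \<and> x \<le> 1"
  shows "integrable L (Bernstein n k)"
  unfolding Bernstein_def mult.assoc
  using integrable_power_mult_one_minus_power[OF assms(1) measurable_ident_sets[OF assms(2)] assms(3)]
  by (intro integrable_mult_right)

lemma integral_Bernstein_eq_if_moments_eq:
  assumes M: "real_distribution M" and N: "real_distribution N"
    and M01: "AE x in M. 0 \<le> x \<and> x \<le> (1::real)" and N01: "AE x in N. 0 \<le> x \<and> x \<le> (1::real)"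
    and moments: "\<And>k. (\<integral>x. x ^ k \<partial>M) = (\<integral>x. x ^ k \<partial>N)"
  shows "(\<integral>x. Bernstein n k x \<partial>M) = (\<integral>x. Bernstein n k x \<partial>N)"
proof -
  have "(\<integral>x. x ^ k * (1 - x) ^ j \<partial>L) = nabla j (\<lambda>k. \<integral>x. x ^ k \<partial>L) k"
    if "real_distribution L" "AE x in L. 0 \<le> x \<and> x \<le> 1" for L j
  proof -
    interpret real_distribution L by fact
    show ?thesis
      using nabla_integral_power[OF finite_measure_axioms _ that(2)] by simp
  qed
  then have "(\<integral>x. x ^ k * (1 - x) ^ (n - k) \<partial>M) = (\<integral>x. x ^ k * (1 - x) ^ (n - k) \<partial>N)"
    using M N M01 N01 moments by simp
  then show ?thesis
    unfolding Bernstein_def mult.assoc by simp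
qed

lemma (in prob_space) abs_integral_diff_le:
  fixes f g :: "'a \<Rightarrow> real"
  assumes "integrable M f" "integrable M g" "AE x in M. \<bar>f x - g x\<bar> \<le> e"
  shows "\<bar>(\<integral>x. f x \<partial>M) - (\<integral>x. g x \<partial>M)\<bar> \<le> e"
proof -
  have "\<bar>(\<integral>x. f x \<partial>M) - (\<integral>x. g x \<partial>M)\<bar> \<le> (\<integral>x. \<bar>f x - g x\<bar> \<partial>M)"
    using assms(1,2) integral_norm_bound[of M "\<lambda>x. f x - g x"] by simp
  also have "\<dots> \<le> (\<integral>x. e \<partial>M)"
    using assms by (intro integral_mono_AE) auto
  finally show ?thesis
    by (simp add: prob_space)
qed

lemma integral_continuous_eq_if_moments_eq:
  fixes f :: "real \<Rightarrow> real"
  assumes M: "real_distribution M" and N: "real_distribution N"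
    and M01: "AE x in M. 0 \<le> x \<and> x \<le> 1" and N01: "AE x in N. 0 \<le> x \<and> x \<le> 1"
    and moments: "\<And>k. (\<integral>x. x ^ k \<partial>M) = (\<integral>x. x ^ k \<partial>N)"
    and f: "continuous_on UNIV f" "\<And>x. \<bar>f x\<bar> \<le> B"
  shows "(\<integral>x. f x \<partial>M) = (\<integral>x. f x \<partial>N)"
proof -
  have f_meas: "f \<in> borel_measurable borel"
    using f(1) by (rule borel_measurable_continuous_onI)
  have close: "\<bar>(\<integral>x. f x \<partial>M) - (\<integral>x. f x \<partial>N)\<bar> \<le> 2 * e" if "e > 0" for e
  proof -
    have "continuous_on {0..1} f"
      using f(1) by (rule continuous_on_subset) simp
    from Bernstein_Weierstrass[OF this \<open>e > 0\<close>] obtain n where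
      approx: "\<And>x. x \<in> {0..1} \<Longrightarrow> \<bar>f x - (\<Sum>k\<le>n. f (k/n) * Bernstein n k x)\<bar> < e"
      by blast
    define P where "P x = (\<Sum>k\<le>n. f (k/n) * Bernstein n k x)" for x
    have P: "integrable L P" "(\<integral>x. P x \<partial>L) = (\<Sum>k\<le>n. f (k/n) * (\<integral>x. Bernstein n k x \<partial>L))"
      and f_close_P: "\<bar>(\<integral>x. f x \<partial>L) - (\<integral>x. P x \<partial>L)\<bar> \<le> e"
      if L: "real_distribution L" "AE x in L. 0 \<le> x \<and> x \<le> 1" for L
    proof -
      interpret L: real_distribution L by fact
      note Bernstein = integrable_Bernstein[OF L.finite_measure_axioms L.events_eq_borel L(2)]
      show "integrable L P"
        unfolding P_def using Bernstein by (intro Bochner_Integration.integrable_sum integrable_mult_right)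
      show "(\<integral>x. P x \<partial>L) = (\<Sum>k\<le>n. f (k/n) * (\<integral>x. Bernstein n k x \<partial>L))"
        unfolding P_def using Bernstein by (simp add: Bochner_Integration.integral_sum)
      show "\<bar>(\<integral>x. f x \<partial>L) - (\<integral>x. P x \<partial>L)\<bar> \<le> e"
      proof (rule L.abs_integral_diff_le)
        show "integrable L f"
          by (rule L.integrable_const_bound[of _ B]) (use f f_meas in auto)
        show "AE x in L. \<bar>f x - P x\<bar> \<le> e"
          using L(2) by eventually_elim (simp add: P_def approx less_imp_le)
      qed fact
    qed
    have "(\<integral>x. P x \<partial>M) = (\<integral>x. P x \<partial>N)"
      using integral_Bernstein_eq_if_moments_eq[OF M N M01 N01 moments] P(2)[OF M M01] P(2)[OF N N01]
      by simp
    then show ?thesis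
      using f_close_P[OF M M01] f_close_P[OF N N01] by linarith
  qed
  have "\<bar>(\<integral>x. f x \<partial>M) - (\<integral>x. f x \<partial>N)\<bar> \<le> 0"
    by (rule field_le_epsilon) (use close[of "_ / 2"] in simp)
  then show ?thesis
    by simp
qed

lemma cdf_le_if_integral_cts_step_eq:
  assumes A: "real_distribution A" and B: "real_distribution B"
    and eq: "\<And>a b. a < b \<Longrightarrow> (\<integral>x. cts_step a b x \<partial>A) = (\<integral>x. cts_step a b x \<partial>B)"
  shows "cdf A x \<le> cdf B x"
proof -
  interpret A: real_distribution A by fact
  interpret B: real_distribution B by fact
  have "(cdf B \<longlongrightarrow> cdf B x) (at_right x)"
    using B.cdf_is_right_cont[of x] by (simp add: continuous_within)
  moreover have "eventually (\<lambda>y. cdf A x \<le> cdf B y) (at_right x)"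
    using eventually_at_right_less[of x]
  proof eventually_elim
    case (elim y)
    have "cdf A x \<le> (\<integral>t. cts_step x y t \<partial>A)"
      using A.cdf_cts_step(1)[OF elim] .
    also have "\<dots> = (\<integral>t. cts_step x y t \<partial>B)"
      using eq[OF elim] .
    also have "\<dots> \<le> cdf B y"
      using B.cdf_cts_step(2)[OF elim] .
    finally show ?case .
  qed
  ultimately show ?thesis
    by (intro tendsto_lowerbound) (auto simp: trivial_limit_at_right_real)
qed

lemma real_distribution_eq_if_moments_eq:
  assumes M: "real_distribution M" and N: "real_distribution N"
    and M01: "AE x in M. 0 \<le> x \<and> x \<le> (1::real)" and N01: "AE x in N. 0 \<le> x \<and> x \<le> (1::real)"
    and moments: "\<And>k. (\<integral>x. x ^ k \<partial>M) = (\<integral>x. x ^ k \<partial>N)"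
  shows "M = N"
proof -
  have cts_step_eq: "(\<integral>t. cts_step a b t \<partial>M) = (\<integral>t. cts_step a b t \<partial>N)" if "a < b" for a b
  proof (rule integral_continuous_eq_if_moments_eq[OF M N M01 N01 moments])
    show "continuous_on UNIV (cts_step a b)"
      using cts_step_uniformly_continuous[OF that] uniformly_continuous_imp_continuous by blast
    show "\<bar>cts_step a b x\<bar> \<le> 1" for x
      using that by (auto simp: cts_step_def divide_simps)
  qed
  have "cdf M = cdf N"
    using cdf_le_if_integral_cts_step_eq[OF M N cts_step_eq]
      cdf_le_if_integral_cts_step_eq[OF N M cts_step_eq[symmetric]]
    by (intro ext antisym)
  then show ?thesis
    using cdf_unique M N by blast
qed

section \<open>Hausdorff's moment theorem\<close>

lemma sum_binomial_nabla: "(\<Sum>j\<le>N. real (N choose j) * nabla (N - j) c (s + j)) = c s"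
proof (induction N arbitrary: s)
  case (Suc N)
  have "(\<Sum>j\<le>Suc N. real (Suc N choose j) * nabla (Suc N - j) c (s + j))
      = nabla (Suc N) c s + (\<Sum>j\<le>N. real (N choose j) * nabla (N - j) c (s + Suc j))
          + (\<Sum>j\<le>N. real (N choose Suc j) * nabla (N - j) c (s + Suc j))"
    by (subst sum.atMost_Suc_shift) (simp add: sum.distrib algebra_simps)
  moreover have "(\<Sum>j\<le>N. real (N choose j) * nabla (N - j) c (s + j))
      = (\<Sum>j\<le>N. real (N choose j) * nabla (Suc (N - j)) c (s + j))
        + (\<Sum>j\<le>N. real (N choose j) * nabla (N - j) c (s + Suc j))"
    by (simp add: nabla_Suc sum.distrib[symmetric] algebra_simps)
  moreover have "(\<Sum>j\<le>N. real (N choose j) * nabla (Suc (N - j)) c (s + j))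
      = (\<Sum>j\<le>Suc N. real (N choose j) * nabla (Suc N - j) c (s + j))"
    by (simp add: Suc_diff_le)
  moreover have "\<dots> = nabla (Suc N) c s + (\<Sum>j\<le>N. real (N choose Suc j) * nabla (N - j) c (s + Suc j))"
    by (subst sum.atMost_Suc_shift) simp
  ultimately show ?case
    using Suc.IH[of s] by simp
qed simp

definition hausdorff_weight :: "(nat \<Rightarrow> real) \<Rightarrow> nat \<Rightarrow> nat \<Rightarrow> real" where
  "hausdorff_weight c n k = (if k \<le> n then real (n choose k) * nabla (n - k) c k else 0)"

lemma sum_hausdorff_weight_choose:
  assumes "m \<le> n"
  shows "(\<Sum>k\<le>n. hausdorff_weight c n k * real (k choose m)) = real (n choose m) * c m"
proof -
  have "(\<Sum>k\<le>n. hausdorff_weight c n k * real (k choose m))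
      = (\<Sum>k\<in>{m..n}. real (n choose k) * real (k choose m) * nabla (n - k) c k)"
    by (rule sum.mono_neutral_cong_right) (auto simp: hausdorff_weight_def)
  also have "\<dots> = (\<Sum>j\<le>n - m. real (n choose (m + j)) * real ((m + j) choose m) * nabla (n - (m + j)) c (m + j))"
  proof -
    have "{m..n} = (\<lambda>j. m + j) ` {..n - m}"
    proof (intro equalityI subsetI)
      fix x assume "x \<in> {m..n}"
      then have "x = m + (x - m)" "x - m \<in> {..n - m}"
        by auto
      then show "x \<in> (\<lambda>j. m + j) ` {..n - m}"
        by blast
    qed (use assms in auto)
    then show ?thesis
      by (simp add: sum.reindex)
  qed
  also have "\<dots> = (\<Sum>j\<le>n - m. real (n choose m) * (real ((n - m) choose j) * nabla ((n - m) - j) c (m + j)))"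
  proof (rule sum.cong)
    fix j assume "j \<in> {..n - m}"
    then have "(n choose (m + j)) * ((m + j) choose m) = (n choose m) * ((n - m) choose j)"
      using choose_mult[of m "m + j" n] assms by simp
    then have "real (n choose (m + j)) * real ((m + j) choose m) = real (n choose m) * real ((n - m) choose j)"
      by (metis of_nat_mult)
    then show "real (n choose (m + j)) * real ((m + j) choose m) * nabla (n - (m + j)) c (m + j)
        = real (n choose m) * (real ((n - m) choose j) * nabla ((n - m) - j) c (m + j))"
      by (simp add: diff_diff_add)
  qed simp
  also have "\<dots> = real (n choose m) * c m"
    using sum_binomial_nabla[of "n - m" c m] by (simp add: sum_distrib_left[symmetric])
  finally show ?thesis .
qed

lemma sum_hausdorff_weight: "(\<Sum>k\<le>n. hausdorff_weight c n k) = c 0"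
  using sum_hausdorff_weight_choose[of 0 n c] by simp

lemma abs_power_minus_prod_le:
  fixes a :: "nat \<Rightarrow> real"
  assumes "\<And>i. i < m \<Longrightarrow> \<bar>a i\<bar> \<le> 1" "\<bar>x\<bar> \<le> 1" "\<And>i. i < m \<Longrightarrow> \<bar>a i - x\<bar> \<le> d"
  shows "\<bar>x ^ m - (\<Prod>i<m. a i)\<bar> \<le> real m * d"
  using assms
proof (induction m)
  case (Suc m)
  have IH: "\<bar>x ^ m - (\<Prod>i<m. a i)\<bar> \<le> real m * d"
    using Suc by auto
  have "0 \<le> d"
    using Suc.prems(3)[of 0] by (meson abs_ge_zero order_trans zero_less_Suc)
  have "\<bar>\<Prod>i<m. a i\<bar> \<le> 1"
    using Suc.prems(1) by (auto simp: abs_prod intro!: prod_le_1)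
  have "x ^ Suc m - (\<Prod>i<Suc m. a i) = x * (x ^ m - (\<Prod>i<m. a i)) + (x - a m) * (\<Prod>i<m. a i)"
    by (simp add: algebra_simps)
  also have "\<bar>\<dots>\<bar> \<le> \<bar>x\<bar> * \<bar>x ^ m - (\<Prod>i<m. a i)\<bar> + \<bar>x - a m\<bar> * \<bar>\<Prod>i<m. a i\<bar>"
    by (metis abs_mult abs_triangle_ineq)
  also have "\<dots> \<le> 1 * (real m * d) + d * 1"
    using Suc.prems IH \<open>0 \<le> d\<close> \<open>\<bar>\<Prod>i<m. a i\<bar> \<le> 1\<close>
    by (intro add_mono mult_mono) (auto simp: abs_minus_commute)
  finally show ?case
    by (simp add: algebra_simps)
qed simp

lemma binomial_ratio_eq_prod:
  assumes "m \<le> n"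
  shows "real (k choose m) / real (n choose m) = (\<Prod>i<m. (real k - real i) / (real n - real i))"
proof -
  have "real (k choose m) = (\<Prod>i<m. real k - real i) / fact m"
    and "real (n choose m) = (\<Prod>i<m. real n - real i) / fact m"
    by (simp_all add: binomial_gbinomial gbinomial_prod_rev atLeast0LessThan)
  moreover have "(\<Prod>i<m. real n - real i) \<noteq> 0"
    using assms by (auto simp: prod_zero_iff)
  ultimately show ?thesis
    by (simp add: prod_dividef)
qed

lemma abs_power_minus_binomial_ratio_le:
  assumes "k \<le> n" "2 * m \<le> n" "1 \<le> n"
  shows "\<bar>(real k / real n) ^ m - real (k choose m) / real (n choose m)\<bar> \<le> real m * (2 * real m / real n)"
proof -
  have "\<bar>(real k / real n) ^ m - (\<Prod>i<m. (real k - real i) / (real n - real i))\<bar> \<le> real m * (2 * real m / real n)"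
  proof (rule abs_power_minus_prod_le)
    fix i assume "i < m"
    then have ni: "real n - real i > 0" "2 * real i \<le> real n" "real n > 0"
      using assms by auto
    show "\<bar>(real k - real i) / (real n - real i)\<bar> \<le> 1"
      using ni assms(1) by (auto simp: abs_le_iff divide_simps)
    have "(real k - real i) / (real n - real i) - real k / real n
        = - (real i * (real n - real k)) / (real n * (real n - real i))"
      using ni by (simp add: field_simps)
    then have "\<bar>(real k - real i) / (real n - real i) - real k / real n\<bar>
        = (real i * (real n - real k)) / (real n * (real n - real i))"
      using ni assms(1) by (simp add: abs_divide abs_mult)
    also have "\<dots> \<le> (2 * real m) / real n"
    proof -
      have "real i * (real n - real k) * real n \<le> (real m * real n) * real n"
        using \<open>i < m\<close> assms(1) by (intro mult_right_mono mult_mono) auto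
      also have "\<dots> = real m * (real n * real n)"
        by simp
      also have "\<dots> \<le> real m * (2 * (real n * (real n - real i)))"
        using ni by (intro mult_left_mono) (auto simp: algebra_simps)
      finally show ?thesis
        using ni by (simp add: divide_simps) (simp add: algebra_simps)
    qed
    finally show "\<bar>(real k - real i) / (real n - real i) - real k / real n\<bar> \<le> 2 * real m / real n" .
  qed (use assms in simp)
  then show ?thesis
    using binomial_ratio_eq_prod[of m n k] assms by simp
qed

context
  fixes c :: "nat \<Rightarrow> real"
  assumes nabla_nonneg: "\<And>j k. 0 \<le> nabla j c k" and c0: "c 0 = 1"
begin

lemma hausdorff_weight_nonneg: "0 \<le> hausdorff_weight c n k"
  by (simp add: hausdorff_weight_def nabla_nonneg)

text \<open>The \<open>m\<close>-th moment of the \<open>n\<close>-th discrete measure differs from \<open>c m\<close> by \<open>O(1/n)\<close>, since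
  \<open>c m\<close> is its moment with respect to \<open>(k choose m) / (n choose m) \<approx> (k/n)\<^sup>m\<close>.\<close>

lemma hausdorff_weight_moments_tendsto:
  "(\<lambda>n. \<Sum>k\<le>n. hausdorff_weight c n k * (real k / real n) ^ m) \<longlonglongrightarrow> c m"
proof -
  have "(\<lambda>n. (\<Sum>k\<le>n. hausdorff_weight c n k * (real k / real n) ^ m) - c m) \<longlonglongrightarrow> 0"
  proof (rule Lim_null_comparison)
    show "(\<lambda>n. real m * (2 * real m / real n)) \<longlonglongrightarrow> 0"
      by real_asymp
    show "\<forall>\<^sub>F n in sequentially.
        norm ((\<Sum>k\<le>n. hausdorff_weight c n k * (real k / real n) ^ m) - c m) \<le> real m * (2 * real m / real n)"
      using eventually_ge_at_top[of "2 * m + 1"]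
    proof eventually_elim
      case (elim n)
      then have "m \<le> n" "2 * m \<le> n" "1 \<le> n" and "real (n choose m) > 0"
        by auto
      then have cm: "c m = (\<Sum>k\<le>n. hausdorff_weight c n k * (real (k choose m) / real (n choose m)))"
        using sum_hausdorff_weight_choose[of m n c] by (simp add: sum_divide_distrib[symmetric])
      have "norm ((\<Sum>k\<le>n. hausdorff_weight c n k * (real k / real n) ^ m) - c m)
          \<le> (\<Sum>k\<le>n. \<bar>hausdorff_weight c n k * ((real k / real n) ^ m - real (k choose m) / real (n choose m))\<bar>)"
        unfolding cm real_norm_def sum_subtractf[symmetric] right_diff_distrib[symmetric] by (rule sum_abs)
      also have "\<dots> \<le> (\<Sum>k\<le>n. hausdorff_weight c n k * (real m * (2 * real m / real n)))"
      proof (rule sum_mono)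
        fix k assume "k \<in> {..n}"
        then have "\<bar>(real k / real n) ^ m - real (k choose m) / real (n choose m)\<bar> \<le> real m * (2 * real m / real n)"
          using abs_power_minus_binomial_ratio_le[OF _ \<open>2 * m \<le> n\<close> \<open>1 \<le> n\<close>] by simp
        then show "\<bar>hausdorff_weight c n k * ((real k / real n) ^ m - real (k choose m) / real (n choose m))\<bar>
            \<le> hausdorff_weight c n k * (real m * (2 * real m / real n))"
          unfolding abs_mult abs_of_nonneg[OF hausdorff_weight_nonneg] by (rule mult_left_mono) (rule hausdorff_weight_nonneg)
      qed
      also have "\<dots> = (\<Sum>k\<le>n. hausdorff_weight c n k) * (real m * (2 * real m / real n))"
        by (rule sum_distrib_right[symmetric])
      also have "\<dots> = real m * (2 * real m / real n)"
        using sum_hausdorff_weight[of c n] c0 by simp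
      finally show ?case .
    qed
  qed
  then show ?thesis
    by (rule LIM_zero_cancel)
qed

definition hausdorff_measure :: "nat \<Rightarrow> real measure" where
  "hausdorff_measure n = distr (measure_pmf (embed_pmf (hausdorff_weight c n))) borel (\<lambda>k. real k / real n)"

lemma pmf_hausdorff_weight: "pmf (embed_pmf (hausdorff_weight c n)) k = hausdorff_weight c n k"
proof (rule pmf_embed_pmf)
  have "(\<integral>\<^sup>+k. ennreal (hausdorff_weight c n k) \<partial>count_space UNIV) = (\<Sum>k\<le>n. ennreal (hausdorff_weight c n k))"
    by (rule nn_integral_count_space') (auto simp: hausdorff_weight_def)
  also have "\<dots> = 1"
    using sum_hausdorff_weight[of c n] c0 by (simp add: sum_ennreal hausdorff_weight_nonneg)
  finally show "(\<integral>\<^sup>+k. ennreal (hausdorff_weight c n k) \<partial>count_space UNIV) = 1" .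
qed (rule hausdorff_weight_nonneg)

lemma set_pmf_hausdorff_weight: "set_pmf (embed_pmf (hausdorff_weight c n)) \<subseteq> {..n}"
  by (auto simp: set_pmf_eq pmf_hausdorff_weight hausdorff_weight_def)

lemma real_distribution_hausdorff_measure: "real_distribution (hausdorff_measure n)"
  unfolding hausdorff_measure_def
  by (rule prob_space.real_distribution_distr) (auto intro: measure_pmf.prob_space_axioms)

lemma AE_hausdorff_measure_01: "AE x in hausdorff_measure n. 0 \<le> x \<and> x \<le> 1"
  unfolding hausdorff_measure_def
  using set_pmf_hausdorff_weight[of n] by (subst AE_distr_iff) (auto simp: AE_measure_pmf_iff divide_simps)

lemma integral_hausdorff_measure:
  assumes "f \<in> borel_measurable borel"
  shows "(\<integral>x. f x \<partial>hausdorff_measure n) = (\<Sum>k\<le>n. f (real k / real n) * hausdorff_weight c n k)"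
proof -
  have "(\<integral>x. f x \<partial>hausdorff_measure n) = (\<integral>k. f (real k / real n) \<partial>embed_pmf (hausdorff_weight c n))"
    unfolding hausdorff_measure_def by (rule integral_distr) (use assms in auto)
  also have "\<dots> = (\<Sum>k\<le>n. f (real k / real n) * hausdorff_weight c n k)"
    using set_pmf_hausdorff_weight[of n]
    by (subst integral_measure_pmf_real) (auto simp: pmf_hausdorff_weight)
  finally show ?thesis .
qed

end

lemma tight_if_AE_01:
  assumes "\<And>n. real_distribution (\<mu> n)" and "\<And>n. AE x in \<mu> n. 0 \<le> x \<and> x \<le> 1"
  shows "tight \<mu>"
  unfolding tight_def
proof (intro conjI allI impI assms(1))
  fix e :: real assume "e > 0"
  have "measure (\<mu> n) {-1<..1} = 1" for n
  proof -
    interpret real_distribution "\<mu> n" by fact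
    have "AE x in \<mu> n. x \<in> {-1<..1}"
      using assms(2)[of n] by eventually_elim auto
    moreover have "{-1<..1::real} = {x. - 1 < x \<and> x \<le> 1}"
      by auto
    ultimately show ?thesis
      using prob_Collect_eq_1[of "\<lambda>x. x \<in> {-1<..1}"] by simp
  qed
  then show "\<exists>a b. a < b \<and> (\<forall>n. 1 - e < measure (\<mu> n) {a<..b})"
    using \<open>e > 0\<close> by (intro exI[of _ "-1::real"] exI[of _ "1::real"]) auto
qed

lemma weak_limit_AE_01:
  assumes \<mu>: "\<And>n. real_distribution (\<mu> n)" "\<And>n. AE x in \<mu> n. 0 \<le> x \<and> x \<le> 1"
    and M: "real_distribution M" and conv: "weak_conv_m \<mu> M"
  shows "AE x in M. 0 \<le> x \<and> x \<le> 1"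
proof -
  interpret M: real_distribution M by fact
  define g where "g y = min 1 (max 0 (- y) + max 0 (y - 1))" for y :: real
  have g_meas: "g \<in> borel_measurable borel"
    unfolding g_def by measurable
  have "isCont g x" "norm (g x) \<le> 1" for x
    unfolding g_def by (auto intro!: continuous_intros)
  then have "(\<lambda>n. \<integral>x. g x \<partial>\<mu> n) \<longlonglongrightarrow> (\<integral>x. g x \<partial>M)"
    by (rule weak_conv_imp_integral_bdd_continuous_conv[OF \<mu>(1) M conv])
  moreover have "(\<integral>x. g x \<partial>\<mu> n) = 0" for n
  proof -
    have "AE x in \<mu> n. g x = 0"
      using \<mu>(2)[of n] by eventually_elim (auto simp: g_def)
    moreover have "g \<in> borel_measurable (\<mu> n)"
      using g_meas measurable_cong_sets[OF real_distribution.events_eq_borel[OF \<mu>(1)] refl] by blast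
    ultimately have "(\<integral>x. g x \<partial>\<mu> n) = (\<integral>x. 0 \<partial>\<mu> n)"
      by (intro integral_cong_AE) simp_all
    then show ?thesis
      by simp
  qed
  ultimately have "(\<integral>x. g x \<partial>M) = 0"
    by (simp add: LIMSEQ_const_iff)
  moreover have "integrable M g"
    by (rule M.integrable_const_bound[where B=1]) (use g_meas in \<open>auto simp: g_def\<close>)
  moreover have "AE x in M. 0 \<le> g x"
    by (simp add: g_def)
  ultimately have "AE x in M. g x = 0"
    using integral_nonneg_eq_0_iff_AE by blast
  then show ?thesis
    by eventually_elim (auto simp: g_def split: if_splits)
qed

lemma weak_limit_moments_01:
  assumes \<mu>: "\<And>n. real_distribution (\<mu> n)" "\<And>n. AE x in \<mu> n. 0 \<le> x \<and> x \<le> 1"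
    and M: "real_distribution M" and conv: "weak_conv_m \<mu> M"
  shows "(\<lambda>n. \<integral>x. x ^ m \<partial>\<mu> n) \<longlonglongrightarrow> (\<integral>x. x ^ m \<partial>M)"
proof -
  define f where "f y = max 0 (min 1 y) ^ m" for y :: real
  have f_meas: "f \<in> borel_measurable borel"
    unfolding f_def by measurable
  have "(\<integral>x. f x \<partial>L) = (\<integral>x. x ^ m \<partial>L)"
    if "real_distribution L" "AE x in L. 0 \<le> x \<and> x \<le> 1" for L
  proof (rule integral_cong_AE)
    have "sets L = sets borel"
      using that(1) by (rule real_distribution.events_eq_borel)
    then show "f \<in> borel_measurable L" "(\<lambda>x. x ^ m) \<in> borel_measurable L"
      using f_meas measurable_cong_sets by (blast, measurable)
    show "AE x in L. f x = x ^ m"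
      using that(2) by eventually_elim (auto simp: f_def)
  qed
  moreover have "isCont f x" "norm (f x) \<le> 1" for x
    unfolding f_def by (auto simp: abs_le_iff power_le_one intro!: continuous_intros)
  then have "(\<lambda>n. \<integral>x. f x \<partial>\<mu> n) \<longlonglongrightarrow> (\<integral>x. f x \<partial>M)"
    by (rule weak_conv_imp_integral_bdd_continuous_conv[OF \<mu>(1) M conv])
  ultimately show ?thesis
    using \<mu> weak_limit_AE_01[OF \<mu> M conv] M by simp
qed

theorem hausdorff_moment_existence:
  assumes nabla_nonneg: "\<And>j k. 0 \<le> nabla j c k" and c0: "c 0 = 1"
  obtains M where "real_distribution M" "AE x in M. 0 \<le> x \<and> x \<le> 1" "\<And>m. (\<integral>x. x ^ m \<partial>M) = c m"
proof -
  have discrete: "\<And>n. real_distribution (hausdorff_measure c n)"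
    "\<And>n. AE x in hausdorff_measure c n. 0 \<le> x \<and> x \<le> 1"
    using real_distribution_hausdorff_measure[OF assms] AE_hausdorff_measure_01[OF assms] by blast+
  have "tight (hausdorff_measure c)"
    by (rule tight_if_AE_01) (rule discrete)+
  then have "\<exists>r M. strict_mono r \<and> real_distribution M \<and> weak_conv_m (hausdorff_measure c \<circ> id \<circ> r) M"
    by (rule tight_imp_convergent_subsubsequence) (simp add: strict_mono_def)
  then obtain r M where r: "strict_mono r" and M: "real_distribution M"
    and conv: "weak_conv_m (hausdorff_measure c \<circ> r) M"
    by auto
  have subsequence: "\<And>n. real_distribution ((hausdorff_measure c \<circ> r) n)"
    "\<And>n. AE x in (hausdorff_measure c \<circ> r) n. 0 \<le> x \<and> x \<le> 1"
    unfolding comp_apply by (rule discrete)+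
  have "(\<lambda>n. \<integral>x. x ^ m \<partial>hausdorff_measure c n) \<longlonglongrightarrow> c m" for m
    using hausdorff_weight_moments_tendsto[OF assms]
    by (simp add: integral_hausdorff_measure[OF assms] mult.commute)
  then have "(\<lambda>n. \<integral>x. x ^ m \<partial>(hausdorff_measure c \<circ> r) n) \<longlonglongrightarrow> c m" for m
    using LIMSEQ_subseq_LIMSEQ[OF _ r] unfolding comp_def by blast
  then have "(\<integral>x. x ^ m \<partial>M) = c m" for m
    using LIMSEQ_unique weak_limit_moments_01[OF subsequence M conv] by blast
  then show ?thesis
    using that M weak_limit_AE_01[OF subsequence M conv] by blast
qed

section \<open>Measures on \<open>[0,\<infinity>]\<close> and the transform \<open>\<integral> e\<^sup>-\<^sup>k\<^sup>x d\<kappa>\<close>\<close>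

lemma prob_on_ext_prob_space: "prob_on_ext \<kappa> \<Longrightarrow> prob_space \<kappa>"
  by (simp add: prob_on_ext_def)

lemma prob_on_ext_space: "prob_on_ext \<kappa> \<Longrightarrow> space \<kappa> = UNIV"
  unfolding prob_on_ext_def using sets_eq_imp_space_eq[of \<kappa> borel] by simp

lemma prob_on_ext_measurable:
  "prob_on_ext \<kappa> \<Longrightarrow> f \<in> borel_measurable borel \<Longrightarrow> f \<in> borel_measurable \<kappa>"
  unfolding prob_on_ext_def using measurable_cong_sets by blast

lemma exp_neg_0 [simp]: "exp_neg 0 = (\<lambda>_. 1)"
  by (simp add: exp_neg_def fun_eq_iff)

lemma exp_neg_zero [simp]: "exp_neg k 0 = 1"
  by (simp add: exp_neg_def)

lemma exp_neg_nonneg: "0 \<le> exp_neg k x"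
  by (simp add: exp_neg_def)

lemma exp_neg_le_1: "exp_neg k x \<le> 1"
  by (auto simp: exp_neg_def enn2real_nonneg)

text \<open>Facts about \<open>exp_neg 1\<close> are stated with \<open>Suc 0\<close>, the simp normal form of \<open>1 :: nat\<close>,
  so that they can serve as simp rules.\<close>

lemma exp_neg_Suc_0_power [simp]: "exp_neg (Suc 0) x ^ k = exp_neg k x"
proof (cases "x = \<infinity>")
  case False
  then show ?thesis
    by (simp add: exp_neg_def exp_of_nat_mult[symmetric])
qed (cases k; simp add: exp_neg_def)

lemma exp_neg_Suc_0_eq_1_iff [simp]: "exp_neg (Suc 0) x = 1 \<longleftrightarrow> x = 0"
  by (cases "x = \<infinity>") (auto simp: exp_neg_def enn2real_eq_0_iff)

lemma exp_neg_add: "exp_neg k (a + b) = exp_neg k a * exp_neg k b"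
proof (cases "a = \<infinity> \<or> b = \<infinity>")
  case False
  then have "enn2real (a + b) = enn2real a + enn2real b"
    by (simp add: enn2real_plus top.not_eq_extremum)
  then show ?thesis
    using False by (simp add: exp_neg_def algebra_simps exp_add[symmetric])
qed (auto simp: exp_neg_def)

lemma exp_neg_sum: "exp_neg k (\<Sum>i\<in>I. f i) = (\<Prod>i\<in>I. exp_neg k (f i))"
  by (induction I rule: infinite_finite_induct) (auto simp: exp_neg_add)

lemma exp_neg_measurable [measurable]: "exp_neg k \<in> borel_measurable borel"
  unfolding exp_neg_def by measurable

lemma integrable_exp_neg:
  assumes "prob_on_ext \<kappa>"
  shows "integrable \<kappa> (exp_neg k)"
proof -
  interpret prob_space \<kappa>
    using assms by (rule prob_on_ext_prob_space)
  show ?thesis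
    using assms by (intro integrable_const_bound[where B=1])
      (auto simp: exp_neg_nonneg exp_neg_le_1 prob_on_ext_measurable)
qed

definition neg_ln_ext :: "real \<Rightarrow> ennreal" where
  "neg_ln_ext y = (if y \<le> 0 then \<infinity> else ennreal (- ln y))"

lemma neg_ln_ext_measurable [measurable]: "neg_ln_ext \<in> borel_measurable borel"
  unfolding neg_ln_ext_def by measurable

lemma exp_neg_neg_ln_ext:
  assumes "0 \<le> y" "y \<le> 1"
  shows "exp_neg k (neg_ln_ext y) = y ^ k"
proof (cases "y = 0")
  case False
  then have "neg_ln_ext y \<noteq> \<infinity>" "enn2real (neg_ln_ext y) = - ln y"
    using assms by (auto simp: neg_ln_ext_def)
  then show ?thesis
    using assms False by (simp add: exp_neg_def exp_of_nat_mult)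
qed (cases k; simp add: neg_ln_ext_def exp_neg_def)

lemma neg_ln_ext_exp_neg [simp]: "neg_ln_ext (exp_neg (Suc 0) x) = x"
  by (cases "x = \<infinity>") (simp_all add: neg_ln_ext_def exp_neg_def ennreal_enn2real top.not_eq_extremum)

lemma distr_exp_neg:
  assumes "prob_on_ext \<kappa>"
  shows "real_distribution (distr \<kappa> borel (exp_neg 1))"
    and "AE x in distr \<kappa> borel (exp_neg 1). 0 \<le> x \<and> x \<le> 1"
    and "(\<integral>x. x ^ k \<partial>distr \<kappa> borel (exp_neg 1)) = (\<integral>x. exp_neg k x \<partial>\<kappa>)"
    and "distr (distr \<kappa> borel (exp_neg 1)) borel neg_ln_ext = \<kappa>"
proof -
  interpret prob_space \<kappa>
    using assms by (rule prob_on_ext_prob_space)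
  have meas: "exp_neg 1 \<in> borel_measurable \<kappa>"
    using assms by (simp add: prob_on_ext_measurable)
  show "real_distribution (distr \<kappa> borel (exp_neg 1))"
    using meas by (rule real_distribution_distr)
  show "AE x in distr \<kappa> borel (exp_neg 1). 0 \<le> x \<and> x \<le> 1"
    using meas by (subst AE_distr_iff) (auto simp: exp_neg_nonneg exp_neg_le_1)
  show "(\<integral>x. x ^ k \<partial>distr \<kappa> borel (exp_neg 1)) = (\<integral>x. exp_neg k x \<partial>\<kappa>)"
    using meas by (subst integral_distr) auto
  have "distr (distr \<kappa> borel (exp_neg 1)) borel neg_ln_ext = distr \<kappa> borel (\<lambda>x. x)"
    using meas by (subst distr_distr) (auto intro!: distr_cong)
  also have "\<dots> = \<kappa>"
    using assms by (intro distr_id2) (simp add: prob_on_ext_def)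
  finally show "distr (distr \<kappa> borel (exp_neg 1)) borel neg_ln_ext = \<kappa>" .
qed

lemma prob_on_ext_eq_if_exp_neg_integrals_eq:
  assumes "prob_on_ext \<kappa>" "prob_on_ext \<kappa>'"
    and "\<And>k. (\<integral>x. exp_neg k x \<partial>\<kappa>) = (\<integral>x. exp_neg k x \<partial>\<kappa>')"
  shows "\<kappa> = \<kappa>'"
proof -
  have "distr \<kappa> borel (exp_neg 1) = distr \<kappa>' borel (exp_neg 1)"
    using distr_exp_neg[OF assms(1)] distr_exp_neg[OF assms(2)] assms(3)
    by (intro real_distribution_eq_if_moments_eq) simp_all
  then show ?thesis
    using distr_exp_neg(4)[OF assms(1)] distr_exp_neg(4)[OF assms(2)] by metis
qed

lemma nabla_exp_neg_integrals_nonneg: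
  assumes "prob_on_ext \<kappa>"
  shows "0 \<le> nabla j (\<lambda>k. \<integral>x. exp_neg k x \<partial>\<kappa>) k"
proof -
  interpret prob_space \<kappa>
    using assms by (rule prob_on_ext_prob_space)
  have "nabla j (\<lambda>k. \<integral>x. exp_neg 1 x ^ k \<partial>\<kappa>) k = (\<integral>x. exp_neg 1 x ^ k * (1 - exp_neg 1 x) ^ j \<partial>\<kappa>)"
    using assms by (intro nabla_integral_power)
      (simp_all add: finite_measure_axioms prob_on_ext_measurable exp_neg_nonneg exp_neg_le_1)
  moreover have "0 \<le> (\<integral>x. exp_neg 1 x ^ k * (1 - exp_neg 1 x) ^ j \<partial>\<kappa>)"
    by (intro integral_nonneg_AE AE_I2 mult_nonneg_nonneg zero_le_power)
       (simp_all add: exp_neg_nonneg exp_neg_le_1)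
  ultimately show ?thesis
    by simp
qed

lemma exp_neg_integral_1_less_1:
  assumes "prob_on_ext \<kappa>" and "measure \<kappa> {0} < 1"
  shows "(\<integral>x. exp_neg 1 x \<partial>\<kappa>) < 1"
proof (rule ccontr)
  interpret prob_space \<kappa>
    using assms(1) by (rule prob_on_ext_prob_space)
  assume "\<not> (\<integral>x. exp_neg 1 x \<partial>\<kappa>) < 1"
  moreover have "(\<integral>x. 1 - exp_neg 1 x \<partial>\<kappa>) = 1 - (\<integral>x. exp_neg 1 x \<partial>\<kappa>)"
    using integrable_exp_neg[OF assms(1)] by (simp add: prob_space)
  moreover have "(\<integral>x. 1 - exp_neg 1 x \<partial>\<kappa>) \<ge> 0"
    by (intro integral_nonneg_AE) (simp add: exp_neg_le_1)
  ultimately have "(\<integral>x. 1 - exp_neg 1 x \<partial>\<kappa>) = 0"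
    by simp
  then have "AE x in \<kappa>. x = 0"
    using integral_nonneg_eq_0_iff_AE[of \<kappa> "\<lambda>x. 1 - exp_neg 1 x"] integrable_exp_neg[OF assms(1)]
    by (simp add: exp_neg_le_1)
  moreover have "sets \<kappa> = sets borel"
    using assms(1) by (simp add: prob_on_ext_def)
  ultimately have "prob {x \<in> space \<kappa>. x = 0} = 1"
    by (subst prob_Collect_eq_1) auto
  moreover have "{x \<in> space \<kappa>. x = 0} = {0}"
    using prob_on_ext_space[OF assms(1)] by auto
  ultimately have "measure \<kappa> {0} = 1"
    by simp
  then show False
    using assms(2) by simp
qed

lemma exp_neg_integral_point_mass:
  assumes "prob_on_ext \<kappa>" and "measure \<kappa> {a} = 1"
  shows "(\<integral>x. exp_neg k x \<partial>\<kappa>) = exp_neg k a"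
proof -
  interpret prob_space \<kappa>
    using assms(1) by (rule prob_on_ext_prob_space)
  have "AE x in \<kappa>. exp_neg k x = exp_neg k a"
    using AE_prob_1[OF assms(2)] by eventually_elim simp
  then have "(\<integral>x. exp_neg k x \<partial>\<kappa>) = (\<integral>x. exp_neg k a \<partial>\<kappa>)"
    using assms(1) by (intro integral_cong_AE) (simp_all add: prob_on_ext_measurable)
  then show ?thesis
    by (simp add: prob_space)
qed

lemma exp_neg_integrals_M_inf:
  assumes "prob_on_ext \<kappa>" and "measure \<kappa> {0} < 1"
  shows "(\<lambda>k. \<integral>x. exp_neg k x \<partial>\<kappa>) \<in> M_inf"
  using nabla_exp_neg_integrals_nonneg[OF assms(1)] exp_neg_integral_1_less_1[OF assms]
    prob_space.prob_space[OF prob_on_ext_prob_space[OF assms(1)]]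
  unfolding M_inf_def by simp

lemma M_inf_exp_neg_representation:
  assumes "\<And>j k. 0 \<le> nabla j c k" and "c 0 = 1"
  obtains \<kappa> where "prob_on_ext \<kappa>" "\<And>k. (\<integral>x. exp_neg k x \<partial>\<kappa>) = c k"
proof -
  obtain M where M: "real_distribution M" and M01: "AE x in M. 0 \<le> x \<and> x \<le> 1"
    and moments: "\<And>m. (\<integral>x. x ^ m \<partial>M) = c m"
    using hausdorff_moment_existence[OF assms] by blast
  interpret M: real_distribution M by fact
  have "prob_on_ext (distr M borel neg_ln_ext)"
    unfolding prob_on_ext_def by (simp add: M.prob_space_distr)
  moreover have "(\<integral>x. exp_neg k x \<partial>distr M borel neg_ln_ext) = c k" for k
  proof -
    have "(\<integral>x. exp_neg k x \<partial>distr M borel neg_ln_ext) = (\<integral>y. exp_neg k (neg_ln_ext y) \<partial>M)"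
      by (rule integral_distr) simp_all
    also have "\<dots> = (\<integral>y. y ^ k \<partial>M)"
    proof (rule integral_cong_AE)
      show "AE y in M. exp_neg k (neg_ln_ext y) = y ^ k"
        using M01 by eventually_elim (simp add: exp_neg_neg_ln_ext)
    qed simp_all
    finally show ?thesis
      using moments by simp
  qed
  ultimately show ?thesis
    using that by blast
qed

section \<open>Convolution powers\<close>

definition convolution_power :: "nat \<Rightarrow> ennreal measure \<Rightarrow> ennreal measure" where
  "convolution_power n \<mu> = distr (PiM {..<n} (\<lambda>_. \<mu>)) borel (\<lambda>\<omega>. \<Sum>i<n. \<omega> i)"

lemma inf_divisible_iff_convolution_roots:
  "inf_divisible \<kappa> \<longleftrightarrow> prob_on_ext \<kappa> \<and>
     (\<forall>n::nat. 2 \<le> n \<longrightarrow> (\<exists>\<mu>. prob_on_ext \<mu> \<and> convolution_power n \<mu> = \<kappa>))"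
  unfolding inf_divisible_def convolution_power_def ..

lemma
  assumes "prob_on_ext \<mu>"
  shows prob_on_ext_convolution_power: "prob_on_ext (convolution_power n \<mu>)"
    and exp_neg_integral_convolution_power:
      "(\<integral>x. exp_neg k x \<partial>convolution_power n \<mu>) = (\<integral>x. exp_neg k x \<partial>\<mu>) ^ n"
proof -
  interpret prob_space \<mu>
    using assms by (rule prob_on_ext_prob_space)
  interpret product_sigma_finite "\<lambda>_. \<mu>"
    by unfold_locales
  have [measurable_cong]: "sets \<mu> = sets borel"
    using assms by (simp add: prob_on_ext_def)
  have prod: "prob_space (PiM {..<n} (\<lambda>_. \<mu>))"
    by (simp add: prob_space_PiM prob_space_axioms)
  have sum_meas: "(\<lambda>\<omega>. \<Sum>i<n. \<omega> i) \<in> borel_measurable (PiM {..<n} (\<lambda>_. \<mu>))"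
    by measurable
  show "prob_on_ext (convolution_power n \<mu>)"
    unfolding prob_on_ext_def convolution_power_def
    using prob_space.prob_space_distr[OF prod sum_meas] by simp
  have "(\<integral>x. exp_neg k x \<partial>convolution_power n \<mu>) = (\<integral>\<omega>. (\<Prod>i<n. exp_neg k (\<omega> i)) \<partial>PiM {..<n} (\<lambda>_. \<mu>))"
    unfolding convolution_power_def using sum_meas by (simp add: integral_distr exp_neg_sum)
  also have "\<dots> = (\<Prod>i<n. \<integral>x. exp_neg k x \<partial>\<mu>)"
    using integrable_exp_neg[OF assms] by (intro product_integral_prod) simp_all
  also have "\<dots> = (\<integral>x. exp_neg k x \<partial>\<mu>) ^ n"
    by simp
  finally show "(\<integral>x. exp_neg k x \<partial>convolution_power n \<mu>) = (\<integral>x. exp_neg k x \<partial>\<mu>) ^ n" .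
qed

lemma inf_divisible_imp_powr_inverse_M_inf:
  assumes pos: "\<And>k. b k > 0" and "inf_divisible \<kappa>" and "measure \<kappa> {0} < 1"
    and b: "\<And>k. b k = (\<integral>x. exp_neg k x \<partial>\<kappa>)" and "1 \<le> n"
  shows "(\<lambda>k. b k powr (1 / real n)) \<in> M_inf"
proof -
  have \<kappa>: "prob_on_ext \<kappa>"
    using assms(2) by (simp add: inf_divisible_def)
  obtain \<mu> where \<mu>: "prob_on_ext \<mu>" and root: "convolution_power n \<mu> = \<kappa>"
  proof (cases "n = 1")
    case True
    have "convolution_power 1 \<kappa> = \<kappa>"
      using \<kappa> by (intro prob_on_ext_eq_if_exp_neg_integrals_eq)
        (simp_all add: prob_on_ext_convolution_power exp_neg_integral_convolution_power)
    then show ?thesis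
      using that \<kappa> True by blast
  next
    case False
    then have "2 \<le> n"
      using \<open>1 \<le> n\<close> by simp
    then show ?thesis
      using that assms(2) unfolding inf_divisible_iff_convolution_roots by blast
  qed
  have b_eq: "b k = (\<integral>x. exp_neg k x \<partial>\<mu>) ^ n" for k
    using b exp_neg_integral_convolution_power[OF \<mu>] root[symmetric] by simp
  have "(\<integral>x. exp_neg k x \<partial>\<mu>) \<ge> 0" for k
    using \<mu> by (intro integral_nonneg_AE) (simp add: exp_neg_nonneg)
  moreover have "(\<integral>x. exp_neg k x \<partial>\<mu>) \<noteq> 0" for k
    using pos[of k] b_eq[of k] \<open>1 \<le> n\<close> by (auto simp: power_0_left)
  ultimately have "(\<integral>x. exp_neg k x \<partial>\<mu>) > 0" for k
    by (simp add: less_le)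
  then have "b k powr (1 / real n) = (\<integral>x. exp_neg k x \<partial>\<mu>)" for k
    using \<open>1 \<le> n\<close> by (simp add: b_eq powr_realpow[symmetric] powr_powr abs_of_pos)
  moreover have "measure \<mu> {0} < 1"
  proof (rule ccontr)
    assume "\<not> measure \<mu> {0} < 1"
    then have "measure \<mu> {0} = 1"
      using prob_space.prob_le_1[OF prob_on_ext_prob_space[OF \<mu>]] by (meson antisym not_less)
    then have "b 1 = 1"
      using b_eq[of 1] exp_neg_integral_point_mass[OF \<mu>] by (simp add: exp_neg_def)
    then show False
      using exp_neg_integral_1_less_1[OF \<kappa> assms(3)] b by simp
  qed
  ultimately show ?thesis
    using exp_neg_integrals_M_inf[OF \<mu>] by simp
qed

lemma LM_inf_imp_inf_divisible_representation:
  assumes "b \<in> LM_inf"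
  obtains \<kappa> where "inf_divisible \<kappa>" "measure \<kappa> {0} < 1" "measure \<kappa> {\<infinity>} < 1"
    "\<And>k. b k = (\<integral>x. exp_neg k x \<partial>\<kappa>)"
proof -
  have pos: "\<And>k. b k > 0" and b1: "b 1 < 1"
    using assms unfolding LM_inf_def by auto
  have root_repr: "\<exists>\<mu>. prob_on_ext \<mu> \<and> (\<forall>k. (\<integral>x. exp_neg k x \<partial>\<mu>) = b k powr (1 / real n))"
    if "1 \<le> n" for n
  proof -
    have "(\<lambda>k. b k powr (1 / real n)) \<in> M_inf"
      using LM_inf_imp_powr_M_inf[OF assms] that by simp
    then have "\<And>j k. 0 \<le> nabla j (\<lambda>k. b k powr (1 / real n)) k" "b 0 powr (1 / real n) = 1"
      unfolding M_inf_def by auto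
    then show ?thesis
      using M_inf_exp_neg_representation by metis
  qed
  obtain \<kappa> where \<kappa>: "prob_on_ext \<kappa>" and b: "\<And>k. (\<integral>x. exp_neg k x \<partial>\<kappa>) = b k"
    using root_repr[of 1] pos by (auto simp: less_imp_le)
  have "inf_divisible \<kappa>"
    unfolding inf_divisible_iff_convolution_roots
  proof (intro conjI allI impI \<kappa>)
    fix n :: nat assume "2 \<le> n"
    then obtain \<mu> where \<mu>: "prob_on_ext \<mu>" and root: "\<And>k. (\<integral>x. exp_neg k x \<partial>\<mu>) = b k powr (1 / real n)"
      using root_repr[of n] by auto
    have "convolution_power n \<mu> = \<kappa>"
    proof (rule prob_on_ext_eq_if_exp_neg_integrals_eq[OF prob_on_ext_convolution_power[OF \<mu>] \<kappa>])
      fix k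
      have "(b k powr (1 / real n)) ^ n = b k"
        using pos[of k] \<open>2 \<le> n\<close> by (simp add: powr_realpow[symmetric] powr_powr)
      then show "(\<integral>x. exp_neg k x \<partial>convolution_power n \<mu>) = (\<integral>x. exp_neg k x \<partial>\<kappa>)"
        using exp_neg_integral_convolution_power[OF \<mu>] root b by simp
    qed
    then show "\<exists>\<mu>. prob_on_ext \<mu> \<and> convolution_power n \<mu> = \<kappa>"
      using \<mu> by blast
  qed
  moreover have "measure \<kappa> {a} \<noteq> 1" if "a = 0 \<or> a = \<infinity>" for a
    using that exp_neg_integral_point_mass[OF \<kappa>, of a 1] b[of 1] b1 pos[of 1]
    by (auto simp: exp_neg_def)
  then have "measure \<kappa> {a} < 1" if "a = 0 \<or> a = \<infinity>" for a
    using that prob_space.prob_le_1[OF prob_on_ext_prob_space[OF \<kappa>], of "{a}"] by fastforce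
  ultimately show ?thesis
    using that b by simp
qed

theorem proposition4p1:
  fixes b :: "nat \<Rightarrow> real"
  assumes pos: "\<forall>k. b k > 0"
  shows "(b \<in> LM_inf \<longleftrightarrow>
           (\<exists>\<kappa>. inf_divisible \<kappa> \<and> measure \<kappa> {0} < 1 \<and> measure \<kappa> {\<infinity>} < 1 \<and>
                 (\<forall>k. b k = integral\<^sup>L \<kappa> (exp_neg k))))
       \<and> (b \<in> LM_inf \<longleftrightarrow> (\<forall>r::real. r > 0 \<longrightarrow> (\<lambda>k. b k powr r) \<in> M_inf))
       \<and> (b \<in> LM_inf \<longleftrightarrow> (\<forall>n::nat. n \<ge> 1 \<longrightarrow> (\<lambda>k. b k powr (1 / real n)) \<in> M_inf))"
proof -
  have i_ii: "b \<in> LM_inf \<Longrightarrow> \<exists>\<kappa>. inf_divisible \<kappa> \<and> measure \<kappa> {0} < 1 \<and> measure \<kappa> {\<infinity>} < 1 \<and>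
      (\<forall>k. b k = integral\<^sup>L \<kappa> (exp_neg k))"
    by (metis LM_inf_imp_inf_divisible_representation)
  have ii_iv: "inf_divisible \<kappa> \<Longrightarrow> measure \<kappa> {0} < 1 \<Longrightarrow> \<forall>k. b k = integral\<^sup>L \<kappa> (exp_neg k) \<Longrightarrow>
      1 \<le> n \<Longrightarrow> (\<lambda>k. b k powr (1 / real n)) \<in> M_inf" for \<kappa> n
    using inf_divisible_imp_powr_inverse_M_inf[of b \<kappa> n] pos by blast
  have i_iii: "b \<in> LM_inf \<Longrightarrow> r > 0 \<Longrightarrow> (\<lambda>k. b k powr r) \<in> M_inf" for r
    by (rule LM_inf_imp_powr_M_inf)
  have iv_i: "(\<forall>n::nat. 1 \<le> n \<longrightarrow> (\<lambda>k. b k powr (1 / real n)) \<in> M_inf) \<Longrightarrow> b \<in> LM_inf"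
    using powr_inverse_M_inf_imp_LM_inf[of b] pos by blast
  show ?thesis
    using i_ii ii_iv i_iii iv_i by auto
qed

end
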